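(* Let $W=a_1a_2\cdots a_n$ be a square-free word, where each $a_i$ is a single letter, and let $V=a_1^{k_1}a_2^{k_2}\cdots a_n^{k_n}$, where each $k_i$ is a positive integer. Then every square occurring as a factor of $V$ is of the form $x^{2k}$ for some positive integer $k$, where $x=a_i$ for some $i\in\{1,2,\dots,n\}$.
   Context: A square is a finite non-empty word of the form $XX$; a word is square-free if it has no factor that is a square. $x^m$ denotes the letter $x$ repeated $m$ times. *)

theory Defs
  imports Main
begin

definition is_factor :: "'a list \<Rightarrow> 'a list \<Rightarrow> bool" where
  "is_factor u w \<longleftrightarrow> (\<exists>p s. w = p @ u @ s)"

definition is_square :: "'a list \<Rightarrow> bool" where
  "is_square u \<longleftrightarrow> (\<exists>X. X \<noteq> [] \<and> u = X @ X)"

definition square_free :: "'a list \<Rightarrow> bool" where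
  "square_free w \<longleftrightarrow> \<not> (\<exists>u. is_factor u w \<and> is_square u)"

definition expand :: "'a list \<Rightarrow> nat list \<Rightarrow> 'a list" where
  "expand W ks = concat (map (\<lambda>(a, m). replicate m a) (zip W ks))"

end

theory Submission
  imports Defs
begin

text \<open>Collapsing every block of equal adjacent letters (\<^const>\<open>remdups_adj\<close>) maps
\<open>V\<close> back to \<open>W\<close>, because adjacent letters of a square-free word differ, and it maps
factors to factors. A square \<open>X X\<close> collapses to \<open>R R\<close> or to \<open>y R' R'\<close>, where
\<open>R = y # R'\<close> is the collapse of \<open>X\<close>; as a factor of \<open>W\<close> this must be square-free,
which forces \<open>R = [y]\<close>, i.e. \<open>X\<close> is a power of a single letter.\<close>

lemma is_factor_trans: "is_factor u v \<Longrightarrow> is_factor v w \<Longrightarrow> is_factor u w"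
  unfolding is_factor_def by (metis append.assoc)

lemma is_factor_set: "is_factor u w \<Longrightarrow> set u \<subseteq> set w"
  unfolding is_factor_def by auto

lemma square_free_factor: "square_free w \<Longrightarrow> is_factor u w \<Longrightarrow> square_free u"
  unfolding square_free_def using is_factor_trans by blast

lemma square_free_square: "X \<noteq> [] \<Longrightarrow> \<not> square_free (X @ X)"
  unfolding square_free_def is_square_def is_factor_def
  by (metis append.left_neutral append.right_neutral)

lemma square_free_imp_distinct_adj: "square_free w \<Longrightarrow> distinct_adj w"
proof (induction w)
  case (Cons x w)
  have "square_free w"
    using Cons.prems by (rule square_free_factor) (auto simp: is_factor_def intro: exI[of _ "[x]"])
  moreover have "x \<noteq> hd w" if "w \<noteq> []"
  proof
    assume "x = hd w"
    then have "is_factor ([x] @ [x]) (x # w)"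
      using that unfolding is_factor_def by (cases w) auto
    then show False
      using Cons.prems square_free_factor square_free_square by blast
  qed
  ultimately show ?case using Cons.IH by (auto simp: distinct_adj_Cons)
qed simp

lemma expand_Cons: "expand (a # W) (k # ks) = replicate k a @ expand W ks"
  by (simp add: expand_def)

lemma remdups_adj_expand:
  assumes "length ks = length W" "\<forall>m \<in> set ks. m > 0" "distinct_adj W"
  shows "remdups_adj (expand W ks) = W"
  using assms
proof (induction ks W rule: list_induct2)
  case Nil
  then show ?case by (simp add: expand_def)
next
  case (Cons k ks a W)
  have IH: "remdups_adj (expand W ks) = W"
    using Cons by (auto simp: distinct_adj_Cons)
  have "k > 0" using Cons.prems by auto
  have "a \<noteq> hd (expand W ks)" if "expand W ks \<noteq> []"
  proof -
    have "W \<noteq> []" "hd (expand W ks) = hd W"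
      using that IH hd_remdups_adj[of "expand W ks"] by auto
    then show ?thesis using Cons.prems(2) by (simp add: distinct_adj_Cons)
  qed
  then have "remdups_adj (replicate k a @ expand W ks)
      = remdups_adj (replicate k a) @ remdups_adj (expand W ks)"
    using \<open>k > 0\<close> by (intro remdups_adj_append') auto
  then show ?case
    using IH \<open>k > 0\<close> by (simp add: expand_Cons remdups_adj_replicate)
qed

lemma remdups_adj_append_prefix: "\<exists>zs. remdups_adj (xs @ ys) = remdups_adj xs @ zs"
  by (cases "xs = []") (auto dest: remdups_adj_append''[of xs ys])

lemma remdups_adj_append_suffix: "\<exists>zs. remdups_adj (xs @ ys) = zs @ remdups_adj ys"
proof -
  obtain zs where "remdups_adj (rev ys @ rev xs) = remdups_adj (rev ys) @ zs"
    using remdups_adj_append_prefix by blast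
  then have "remdups_adj (xs @ ys) = rev zs @ remdups_adj ys"
    by (metis remdups_adj_rev rev_append rev_rev_ident)
  then show ?thesis by blast
qed

lemma is_factor_remdups_adj:
  "is_factor u w \<Longrightarrow> is_factor (remdups_adj u) (remdups_adj w)"
proof -
  assume "is_factor u w"
  then obtain p s where w: "w = p @ u @ s"
    unfolding is_factor_def by blast
  obtain zs where "remdups_adj (p @ u @ s) = zs @ remdups_adj (u @ s)"
    using remdups_adj_append_suffix by blast
  moreover obtain zs' where "remdups_adj (u @ s) = remdups_adj u @ zs'"
    using remdups_adj_append_prefix by blast
  ultimately show ?thesis
    unfolding is_factor_def w by auto
qed

lemma remdups_adj_append_self:
  assumes "X \<noteq> []"
  shows "remdups_adj (X @ X) =
    (if last X = hd X then remdups_adj X @ tl (remdups_adj X) else remdups_adj X @ remdups_adj X)"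
proof (cases "last X = hd X")
  case True
  have "X = butlast X @ [hd X]"
    using assms True by (metis append_butlast_last_id)
  then have "remdups_adj (X @ X) = remdups_adj X @ tl (remdups_adj (hd X # X))"
    using remdups_adj_append[of "butlast X" "hd X" X] by (metis append.assoc append_Cons append_Nil)
  also have "remdups_adj (hd X # X) = remdups_adj X"
    using assms by (cases X) auto
  finally show ?thesis using True by simp
qed (simp add: remdups_adj_append')

lemma square_free_remdups_adj_square:
  assumes "X \<noteq> []" "square_free (remdups_adj (X @ X))"
  shows "X = replicate (length X) (hd X)"
proof -
  define R where "R = remdups_adj X"
  obtain R' where R: "R = hd X # R'"
    using assms(1) unfolding R_def by (cases "remdups_adj X") (auto dest: arg_cong[of _ _ hd])
  have "last X = hd X"
  proof (rule ccontr)
    assume "last X \<noteq> hd X"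
    then have "remdups_adj (X @ X) = R @ R"
      using remdups_adj_append_self[OF assms(1)] by (simp add: R_def)
    then show False
      using assms(2) square_free_square[of R] R by simp
  qed
  then have "remdups_adj (X @ X) = [hd X] @ R' @ R'"
    using remdups_adj_append_self[OF assms(1)] R by (simp add: R_def)
  then have "is_factor (R' @ R') (remdups_adj (X @ X))"
    unfolding is_factor_def by (metis append_Nil2)
  then have "R' = []"
    using assms(2) square_free_factor square_free_square by blast
  then have "remdups_adj X = [hd X]"
    using R unfolding R_def by simp
  then show ?thesis by (rule remdups_adj_singleton)
qed

theorem lemma2p8:
  fixes W :: "'a list" and ks :: "nat list"
  assumes "square_free W"
    and "length ks = length W"
    and "\<forall>m \<in> set ks. m > 0"
    and "is_factor u (expand W ks)"
    and "is_square u"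
  shows "\<exists>k x. k > 0 \<and> x \<in> set W \<and> u = replicate (2 * k) x"
proof -
  obtain X where X: "X \<noteq> []" "u = X @ X"
    using assms(5) unfolding is_square_def by blast
  have "remdups_adj (expand W ks) = W"
    using assms(1-3) by (simp add: remdups_adj_expand square_free_imp_distinct_adj)
  then have factor: "is_factor (remdups_adj u) W"
    using assms(4) is_factor_remdups_adj by metis
  then have "X = replicate (length X) (hd X)"
    using X assms(1) square_free_factor square_free_remdups_adj_square by blast
  then have "u = replicate (2 * length X) (hd X)"
    using X(2) by (metis mult_2 replicate_add)
  moreover have "hd X \<in> set W"
    using X is_factor_set[OF factor] by auto
  ultimately show ?thesis
    using X(1) by blast
qed

end
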